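(* Let $\Phi_p\in\mathbb{R}^{n\times d}$ be fixed with $\hat\Sigma:=\tfrac1n\Phi_p^\top\Phi_p=\mathrm{diag}(\sigma_1^2,\dots,\sigma_d^2)$, all $\sigma_j^2>0$. Suppose $Y_p=\Phi_p\beta_0+\epsilon$ with $\beta_0\in\mathbb{R}^d$ and $\epsilon\in\mathbb{R}^n$ having i.i.d. entries of mean $0$ and variance $\sigma^2$. Let $\mu\in\mathbb{R}^{1\times d}$ be a fixed target mean vector (the population target feature mean $\mathbb{E}[\Phi_q]$), let $\lambda,\delta\ge0$, let $\hat\beta^\lambda:=(\hat\Sigma+\lambda I)^{-1}\Phi_p^\top Y_p/n$, let $\hat v:=\mu(\hat\Sigma+\delta I)^{-1}\Phi_p^\top/n$, and consider the augmented estimator $\hat\psi:=\mu\hat\beta^\lambda+\hat v(Y_p-\Phi_p\hat\beta^\lambda)$ of $\mu\beta_0$. Let $\Gamma_{\lambda,\delta}:=\mathrm{diag}(\gamma_1,\dots,\gamma_d)$ with $\gamma_j:=\frac{\delta\lambda}{\sigma_j^2+\delta+\lambda}$ (and $\gamma_j:=0$ if $\delta=\lambda=0$). Then, with expectation and variance taken over $\epsilon$, $$\big(\mathbb{E}[\hat\psi]-\mu\beta_0\big)^2=\beta_0^\top(\hat\Sigma+\Gamma_{\lambda,\delta})^{-1}\Gamma_{\lambda,\delta}\,\mu^\top\mu\,\Gamma_{\lambda,\delta}(\hat\Sigma+\Gamma_{\lambda,\delta})^{-1}\beta_0,$$ $$\mathrm{Var}(\hat\psi)=\frac{\sigma^2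}{n}\,\mathrm{tr}\!\left[\hat\Sigma(\hat\Sigma+\Gamma_{\lambda,\delta})^{-1}\mu^\top\mu(\hat\Sigma+\Gamma_{\lambda,\delta})^{-1}\right].$$
   Context: This is a design-conditional analysis: $\Phi_p$ and the target mean $\mu$ are treated as fixed; only the noise $\epsilon$ is random. The hyperparameters are on the rescaled scale where ridge regression is $(\hat\Sigma+\lambda I)^{-1}\Phi_p^\top Y_p/n$. *)

theory Defs
  imports "HOL-Analysis.Analysis" "HOL-Probability.Probability"
begin

definition emp_cov :: "real^'d^'n \<Rightarrow> real^'d^'d" where
  "emp_cov Phi = (1 / real CARD('n)) *\<^sub>R (transpose Phi ** Phi)"

definition diag_mat :: "('d \<Rightarrow> real) \<Rightarrow> real^'d^'d" where
  "diag_mat f = (\<chi> i j. if i = j then f i else 0)"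

definition outer :: "real^'d \<Rightarrow> real^'d^'d" where
  "outer mu = (\<chi> i j. mu $ i * mu $ j)"

definition gam :: "('d \<Rightarrow> real) \<Rightarrow> real \<Rightarrow> real \<Rightarrow> 'd \<Rightarrow> real" where
  "gam s dlt lam j = (if dlt = 0 \<and> lam = 0 then 0 else dlt * lam / (s j + dlt + lam))"

end

theory Submission imports Defs begin

text \<open>
  Since the empirical covariance is diagonal, every matrix involved is diagonal, and on
  coordinate j the ridge shrinkage 1/(s_j + lambda) plus the correction
  (1 - s_j/(s_j + lambda))/(s_j + delta) contributed by the augmentation term equals
  1/(s_j + gamma_j). Hence the augmented estimator is the generalized ridge plug-in
  mu (Sigma + Gamma)^-1 Phi^T Y / n, which is affine in the noise: its mean
  mu (Sigma + Gamma)^-1 Sigma beta0 misses mu beta0 by mu (Sigma + Gamma)^-1 Gamma beta0, and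
  since the noise coordinates are uncorrelated with common variance sigma^2 its variance is
  sigma^2 times the squared norm of Phi (Sigma + Gamma)^-1 mu / n.
\<close>

lemma sum_delta_mult:
  fixes a b :: "'n::finite \<Rightarrow> real"
  shows "(\<Sum>k\<in>UNIV. (if i = k then a k else 0) * b k) = a i * b i"
  by (simp add: if_distrib if_distribR sum.delta cong: if_cong)

lemma diag_mat_mult: "diag_mat f ** diag_mat g = diag_mat (\<lambda>j. f j * g j)"
  by (simp add: diag_mat_def matrix_matrix_mult_def vec_eq_iff sum_delta_mult)

lemma diag_mat_add: "diag_mat f + diag_mat g = diag_mat (\<lambda>j. f j + g j)"
  by (simp add: diag_mat_def vec_eq_iff)

lemma diag_mat_diff: "diag_mat f - diag_mat g = diag_mat (\<lambda>j. f j - g j)"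
  by (simp add: diag_mat_def vec_eq_iff)

lemma mat_1_eq_diag_mat: "mat 1 = diag_mat (\<lambda>_. 1)"
  by (simp add: diag_mat_def vec_eq_iff mat_def)

lemma scaleR_mat_1_eq_diag_mat: "c *\<^sub>R mat 1 = diag_mat (\<lambda>_. c)"
  by (simp add: diag_mat_def vec_eq_iff mat_def)

lemma transpose_diag_mat [simp]: "transpose (diag_mat f) = diag_mat f"
  by (simp add: diag_mat_def transpose_def vec_eq_iff)

lemma matrix_inv_diag_mat:
  assumes "\<And>j. f j \<noteq> 0"
  shows "matrix_inv (diag_mat f) = diag_mat (\<lambda>j. 1 / f j)"
proof -
  let ?D = "diag_mat f" and ?E = "diag_mat (\<lambda>j. 1 / f j)"
  have inverse: "?D ** ?E = mat 1" "?E ** ?D = mat 1"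
    using assms by (simp_all add: diag_mat_mult mat_1_eq_diag_mat)
  then have "?D ** matrix_inv ?D = mat 1 \<and> matrix_inv ?D ** ?D = mat 1"
    unfolding matrix_inv_def by (rule someI[of _ ?E, OF conjI])
  then have "matrix_inv ?D = matrix_inv ?D ** (?D ** ?E)"
    using inverse by simp
  also have "\<dots> = ?E"
    using \<open>?D ** matrix_inv ?D = mat 1 \<and> matrix_inv ?D ** ?D = mat 1\<close>
    by (simp add: matrix_mul_assoc)
  finally show ?thesis .
qed

lemma transpose_matrix_inv_diag_mat:
  assumes "\<And>j. f j \<noteq> 0"
  shows "transpose (matrix_inv (diag_mat f)) = matrix_inv (diag_mat f)"
  using assms by (simp add: matrix_inv_diag_mat)

lemma inner_matrix_vector_left: "(A *v x) \<bullet> y = x \<bullet> (transpose A *v (y :: real^'m))"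
  using dot_lmul_matrix[of x "transpose A" y] by simp

lemma outer_mult_vec: "outer mu *v x = (mu \<bullet> x) *\<^sub>R mu"
  by (simp add: outer_def matrix_vector_mult_def inner_vec_def vec_eq_iff
      sum_distrib_left ac_simps)

lemma trace_mult_outer: "trace (X ** outer mu) = mu \<bullet> (X *v mu)"
  by (simp add: trace_def outer_def matrix_matrix_mult_def matrix_vector_mult_def
      inner_vec_def sum_distrib_left ac_simps)

lemma inner_transpose_outer_mult:
  "x \<bullet> ((transpose B ** outer mu ** B) *v x) = (mu \<bullet> (B *v x))\<^sup>2"
proof -
  have "(transpose B ** outer mu ** B) *v x = (mu \<bullet> (B *v x)) *\<^sub>R (transpose B *v mu)"
    by (simp add: matrix_vector_mul_assoc[symmetric] outer_mult_vec matrix_vector_mult_scaleR)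
  moreover have "x \<bullet> (transpose B *v mu) = mu \<bullet> (B *v x)"
    using inner_matrix_vector_left[of B x mu] by (simp add: inner_commute)
  ultimately show ?thesis
    by (simp add: power2_eq_square)
qed

lemma card_scaleR_emp_cov: "real CARD('n) *\<^sub>R emp_cov (Phi :: real^'d^'n) = transpose Phi ** Phi"
  by (simp add: emp_cov_def)

lemma ridge_correction_shrinkage:
  fixes s l d :: real
  assumes "s > 0" "l \<ge> 0" "d \<ge> 0"
  shows "1 / (s + l) + 1 / (s + d) * (1 - s * (1 / (s + l)))
       = 1 / (s + (if d = 0 \<and> l = 0 then 0 else d * l / (s + d + l)))"
proof (cases "d = 0 \<and> l = 0")
  case False
  have pos: "s + l > 0" "s + d > 0" "s + d + l > 0"
    using assms by auto
  have "1 / (s + l) + 1 / (s + d) * (1 - s * (1 / (s + l))) = (s + d + l) / ((s + d) * (s + l))"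
    using pos by (simp add: divide_simps)
  moreover have "s + d * l / (s + d + l) = (s + d) * (s + l) / (s + d + l)"
    using pos by (simp add: field_simps)
  ultimately show ?thesis
    using False by simp
qed (use assms in simp)

lemma add_gam_pos:
  assumes "\<And>j. s j > 0" "lam \<ge> 0" "dlt \<ge> 0"
  shows "s j + gam s dlt lam j > 0"
proof -
  have "gam s dlt lam j \<ge> 0"
    using assms by (auto simp: gam_def intro!: divide_nonneg_pos add_pos_nonneg)
  then show ?thesis
    using assms(1)[of j] by simp
qed

lemma augmented_ridge_filter:
  assumes spos: "\<And>j. s j > 0" and lam: "lam \<ge> 0" and dlt: "dlt \<ge> 0"
  shows "matrix_inv (diag_mat s + lam *\<^sub>R mat 1)
           + matrix_inv (diag_mat s + dlt *\<^sub>R mat 1)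
             ** (mat 1 - diag_mat s ** matrix_inv (diag_mat s + lam *\<^sub>R mat 1))
         = matrix_inv (diag_mat s + diag_mat (gam s dlt lam))"
proof -
  have nonzero: "s j + lam \<noteq> 0" "s j + dlt \<noteq> 0" "s j + gam s dlt lam j \<noteq> 0" for j
    using spos[of j] lam dlt add_gam_pos[where s = s and j = j, OF spos lam dlt]
    by (simp_all add: add_pos_nonneg less_imp_neq[symmetric])
  have inverses:
    "matrix_inv (diag_mat s + lam *\<^sub>R mat 1) = diag_mat (\<lambda>j. 1 / (s j + lam))"
    "matrix_inv (diag_mat s + dlt *\<^sub>R mat 1) = diag_mat (\<lambda>j. 1 / (s j + dlt))"
    "matrix_inv (diag_mat s + diag_mat (gam s dlt lam)) = diag_mat (\<lambda>j. 1 / (s j + gam s dlt lam j))"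
    unfolding scaleR_mat_1_eq_diag_mat diag_mat_add by (simp_all add: matrix_inv_diag_mat nonzero)
  show ?thesis
    unfolding inverses unfolding mat_1_eq_diag_mat diag_mat_mult diag_mat_diff diag_mat_add
    using ridge_correction_shrinkage[OF spos lam dlt] by (simp add: gam_def)
qed

lemma augmented_estimator_eq_generalized_ridge:
  fixes Phi :: "real^'d^'n" and Y :: "real^'n" and mu :: "real^'d" and lam dlt :: real
  defines "n \<equiv> real CARD('n)"
  defines "betahat \<equiv> (1 / n) *\<^sub>R (matrix_inv (emp_cov Phi + lam *\<^sub>R mat 1) *v (transpose Phi *v Y))"
    and "vhat \<equiv> (1 / n) *\<^sub>R (mu v* (matrix_inv (emp_cov Phi + dlt *\<^sub>R mat 1) ** transpose Phi))"
  assumes diag: "emp_cov Phi = diag_mat s"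
    and spos: "\<And>j. s j > 0" and lam: "lam \<ge> 0" and dlt: "dlt \<ge> 0"
  shows "mu \<bullet> betahat + vhat \<bullet> (Y - Phi *v betahat)
       = mu \<bullet> ((1 / n) *\<^sub>R (matrix_inv (emp_cov Phi + diag_mat (gam s dlt lam)) *v (transpose Phi *v Y)))"
proof -
  define S where "S = diag_mat s"
  define L where "L = matrix_inv (S + lam *\<^sub>R mat 1)"
  define D where "D = matrix_inv (S + dlt *\<^sub>R mat 1)"
  define u where "u = (1 / n) *\<^sub>R (transpose Phi *v Y)"
  have "n > 0"
    unfolding n_def by simp
  have gram: "transpose Phi ** Phi = n *\<^sub>R S"
    unfolding n_def S_def diag[symmetric] card_scaleR_emp_cov ..
  have betahat: "betahat = L *v u"
    unfolding betahat_def u_def L_def S_def diag by (simp add: matrix_vector_mult_scaleR)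
  have residual: "(1 / n) *\<^sub>R (transpose Phi *v (Y - Phi *v betahat)) = u - S *v betahat"
    using \<open>n > 0\<close>
    by (simp add: u_def gram matrix_vector_mult_diff_distrib matrix_vector_mul_assoc
        scaleR_matrix_vector_assoc[symmetric] scaleR_diff_right)
  have correction: "vhat \<bullet> z = mu \<bullet> (D *v ((1 / n) *\<^sub>R (transpose Phi *v z)))" for z
    unfolding vhat_def D_def S_def diag inner_scaleR_left dot_lmul_matrix
      matrix_vector_mult_scaleR inner_scaleR_right matrix_vector_mul_assoc[symmetric] ..
  have "mu \<bullet> betahat + vhat \<bullet> (Y - Phi *v betahat) = mu \<bullet> (L *v u + D *v (u - S *v (L *v u)))"
    unfolding correction residual unfolding betahat inner_add_right ..
  also have "L *v u + D *v (u - S *v (L *v u)) = (L + D ** (mat 1 - S ** L)) *v u"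
    by (simp add: matrix_vector_mult_add_rdistrib matrix_vector_mult_diff_rdistrib
        matrix_vector_mul_assoc[symmetric])
  also have "L + D ** (mat 1 - S ** L) = matrix_inv (S + diag_mat (gam s dlt lam))"
    unfolding L_def D_def S_def using spos lam dlt by (rule augmented_ridge_filter)
  finally show ?thesis
    unfolding u_def S_def diag matrix_vector_mult_scaleR .
qed

lemma generalized_ridge_plugin_affine:
  fixes Phi :: "real^'d^'n"
  shows "mu \<bullet> ((1 / real CARD('n)) *\<^sub>R (A *v (transpose Phi *v (Phi *v beta + e))))
       = mu \<bullet> (A *v (emp_cov Phi *v beta))
         + ((1 / real CARD('n)) *\<^sub>R (Phi *v (transpose A *v mu))) \<bullet> e"
proof -
  have signal: "transpose Phi *v (Phi *v beta) = real CARD('n) *\<^sub>R (emp_cov Phi *v beta)"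
    by (simp add: matrix_vector_mul_assoc card_scaleR_emp_cov[symmetric] scaleR_matrix_vector_assoc)
  have noise: "mu \<bullet> (A *v (transpose Phi *v e)) = (Phi *v (transpose A *v mu)) \<bullet> e"
    using inner_matrix_vector_left[of A "transpose Phi *v e" mu]
      inner_matrix_vector_left[of "transpose Phi" e "transpose A *v mu"]
    by (simp add: inner_commute)
  show ?thesis
    by (simp del: transpose_matrix_vector
        add: signal noise matrix_vector_right_distrib matrix_vector_mult_scaleR inner_add_right
        add_divide_distrib)
qed

lemma augmented_estimator_affine_in_noise:
  fixes Phi :: "real^'d^'n" and mu beta :: "real^'d" and e :: "real^'n"
    and s :: "'d \<Rightarrow> real" and lam dlt :: real
  defines "n \<equiv> real CARD('n)"
  defines "betahat \<equiv> (1 / n) *\<^sub>R (matrix_inv (emp_cov Phi + lam *\<^sub>R mat 1) *v (transpose Phi *v (Phi *v beta + e)))"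
    and "vhat \<equiv> (1 / n) *\<^sub>R (mu v* (matrix_inv (emp_cov Phi + dlt *\<^sub>R mat 1) ** transpose Phi))"
    and "A \<equiv> matrix_inv (emp_cov Phi + diag_mat (gam s dlt lam))"
  assumes diag: "emp_cov Phi = diag_mat s"
    and spos: "\<And>j. s j > 0" and lam: "lam \<ge> 0" and dlt: "dlt \<ge> 0"
  shows "mu \<bullet> betahat + vhat \<bullet> (Phi *v beta + e - Phi *v betahat)
       = mu \<bullet> (A *v (emp_cov Phi *v beta)) + ((1 / n) *\<^sub>R (Phi *v (A *v mu))) \<bullet> e"
proof -
  have "s j + gam s dlt lam j \<noteq> 0" for j
    using add_gam_pos[where s = s and j = j, OF spos lam dlt] by simp
  then have "transpose A = A"
    unfolding A_def diag diag_mat_add by (rule transpose_matrix_inv_diag_mat)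
  show ?thesis
    unfolding betahat_def vhat_def n_def
    unfolding augmented_estimator_eq_generalized_ridge[OF diag spos lam dlt]
    unfolding generalized_ridge_plugin_affine A_def[symmetric] \<open>transpose A = A\<close> ..
qed

lemma generalized_ridge_bias:
  assumes "\<And>j. s j + g j \<noteq> 0"
  defines "A \<equiv> matrix_inv (diag_mat s + diag_mat g)" and "G \<equiv> diag_mat g"
  shows "(mu \<bullet> (A *v (diag_mat s *v beta)) - mu \<bullet> beta)\<^sup>2
       = beta \<bullet> ((A ** G ** outer mu ** G ** A) *v beta)"
proof -
  have A: "A = diag_mat (\<lambda>j. 1 / (s j + g j))"
    unfolding A_def diag_mat_add using assms(1) by (rule matrix_inv_diag_mat)
  have "A ** diag_mat s = mat 1 - G ** A"
    unfolding A G_def mat_1_eq_diag_mat diag_mat_mult diag_mat_diff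
    using assms by (simp add: field_simps)
  then have "mu \<bullet> (A *v (diag_mat s *v beta)) - mu \<bullet> beta = - (mu \<bullet> ((G ** A) *v beta))"
    by (simp add: matrix_vector_mul_assoc matrix_vector_mult_diff_rdistrib inner_diff_right)
  moreover have "transpose (G ** A) = A ** G"
    unfolding A G_def by (simp add: matrix_transpose_mul)
  ultimately show ?thesis
    using inner_transpose_outer_mult[of beta "G ** A" mu] by (simp add: matrix_mul_assoc)
qed

lemma noise_weight_inner_self_eq_trace:
  fixes Phi :: "real^'d^'n"
  assumes "transpose A = A"
  defines "n \<equiv> real CARD('n)"
  shows "((1 / n) *\<^sub>R (Phi *v (A *v mu))) \<bullet> ((1 / n) *\<^sub>R (Phi *v (A *v mu)))
       = 1 / n * trace (emp_cov Phi ** A ** outer mu ** A)"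
proof -
  define x where "x = A *v mu"
  have "(Phi *v x) \<bullet> (Phi *v x) = n * (x \<bullet> (emp_cov Phi *v x))"
    using inner_matrix_vector_left[of Phi x "Phi *v x"]
    by (simp add: n_def matrix_vector_mul_assoc card_scaleR_emp_cov[symmetric]
        scaleR_matrix_vector_assoc[symmetric])
  also have "x \<bullet> (emp_cov Phi *v x) = mu \<bullet> ((A ** emp_cov Phi ** A) *v mu)"
    using inner_matrix_vector_left[of A mu "emp_cov Phi *v x"] assms(1)
    by (simp add: x_def matrix_vector_mul_assoc matrix_mul_assoc)
  also have "\<dots> = trace (emp_cov Phi ** A ** outer mu ** A)"
    by (metis trace_mult_outer trace_mul_sym matrix_mul_assoc)
  finally show ?thesis
    unfolding x_def n_def by (simp add: power2_eq_square)
qed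

context prob_space
begin

context
  fixes X :: "'a \<Rightarrow> real^'i" and sg :: real
  assumes measurable: "\<And>i. (\<lambda>w. X w $ i) \<in> borel_measurable M"
    and indep: "indep_vars (\<lambda>_. borel) (\<lambda>i w. X w $ i) UNIV"
    and square_integrable: "\<And>i. integrable M (\<lambda>w. (X w $ i)\<^sup>2)"
    and centered: "\<And>i. expectation (\<lambda>w. X w $ i) = 0"
    and component_variance: "\<And>i. variance (\<lambda>w. X w $ i) = sg\<^sup>2"
begin

lemma integrable_component: "integrable M (\<lambda>w. X w $ i)"
  using measurable square_integrable by (rule square_integrable_imp_integrable)

lemma integrable_component_products: "integrable M (\<lambda>w. X w $ i * X w $ k)"
proof (cases "i = k")
  case True
  then show ?thesis
    using square_integrable[of i] by (simp add: power2_eq_square)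
next
  case False
  have "integrable M (\<lambda>w. \<Prod>j\<in>{i, k}. X w $ j)"
    by (rule indep_vars_integrable) (auto intro: indep_vars_subset[OF indep] integrable_component)
  then show ?thesis
    using False by simp
qed

lemma expectation_component_products:
  "expectation (\<lambda>w. X w $ i * X w $ k) = (if i = k then sg\<^sup>2 else 0)"
proof (cases "i = k")
  case True
  then show ?thesis
    using component_variance[of i] centered[of i] by (simp add: power2_eq_square)
next
  case False
  have "expectation (\<lambda>w. \<Prod>j\<in>{i, k}. X w $ j) = (\<Prod>j\<in>{i, k}. expectation (\<lambda>w. X w $ j))"
    by (rule indep_vars_lebesgue_integral) (auto intro: indep_vars_subset[OF indep] integrable_component)
  then show ?thesis
    using False centered by simp
qed

lemma expectation_affine_white_noise: "expectation (\<lambda>w. K + c \<bullet> X w) = K"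
proof -
  have "integrable M (\<lambda>w. c \<bullet> X w)" and "expectation (\<lambda>w. c \<bullet> X w) = 0"
    using integrable_component centered by (simp_all add: inner_vec_def)
  then show ?thesis
    by (simp add: prob_space)
qed

lemma variance_affine_white_noise: "variance (\<lambda>w. K + c \<bullet> X w) = sg\<^sup>2 * (c \<bullet> c)"
proof -
  have "variance (\<lambda>w. K + c \<bullet> X w) = expectation (\<lambda>w. (c \<bullet> X w)\<^sup>2)"
    by (simp add: expectation_affine_white_noise)
  also have "\<dots> = expectation (\<lambda>w. \<Sum>i\<in>UNIV. \<Sum>k\<in>UNIV. c $ i * c $ k * (X w $ i * X w $ k))"
    by (simp add: inner_vec_def power2_eq_square sum_product ac_simps)
  also have "\<dots> = (\<Sum>i\<in>UNIV. \<Sum>k\<in>UNIV. c $ i * c $ k * expectation (\<lambda>w. X w $ i * X w $ k))"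
    using integrable_component_products by simp
  also have "\<dots> = sg\<^sup>2 * (c \<bullet> c)"
    by (simp add: expectation_component_products inner_vec_def if_distrib sum_distrib_left
        ac_simps cong: if_cong)
  finally show ?thesis .
qed

end

end

theorem mainTheorem9:
  fixes Phi :: "real^'d^'n" and s :: "'d \<Rightarrow> real"
    and beta0 mu :: "real^'d" and lam dlt sigma :: real
    and M :: "'w measure" and eps :: "'w \<Rightarrow> real^'n"
  assumes diag: "emp_cov Phi = diag_mat s"
    and spos: "\<And>j. s j > 0"
    and lam: "lam \<ge> 0" and dlt: "dlt \<ge> 0"
    and P: "prob_space M"
    and rv: "\<And>i. (\<lambda>w. eps w $ i) \<in> borel_measurable M"
    and indep: "prob_space.indep_vars M (\<lambda>_. borel) (\<lambda>i w. eps w $ i) UNIV"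
    and ident: "\<And>i k. distr M borel (\<lambda>w. eps w $ i) = distr M borel (\<lambda>w. eps w $ k)"
    and sq_int: "\<And>i. integrable M (\<lambda>w. (eps w $ i)\<^sup>2)"
    and mean0: "\<And>i. prob_space.expectation M (\<lambda>w. eps w $ i) = 0"
    and var: "\<And>i. prob_space.variance M (\<lambda>w. eps w $ i) = sigma\<^sup>2"
  shows
    "let n = real CARD('n);
         Sig = emp_cov Phi;
         Y = (\<lambda>w. Phi *v beta0 + eps w);
         betahat = (\<lambda>w. (1 / n) *\<^sub>R (matrix_inv (Sig + lam *\<^sub>R mat 1) *v (transpose Phi *v Y w)));
         vhat = (1 / n) *\<^sub>R (mu v* (matrix_inv (Sig + dlt *\<^sub>R mat 1) ** transpose Phi));
         psi = (\<lambda>w. mu \<bullet> betahat w + vhat \<bullet> (Y w - Phi *v betahat w));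
         G = diag_mat (gam s dlt lam);
         A = matrix_inv (Sig + G)
     in (prob_space.expectation M psi - mu \<bullet> beta0)\<^sup>2
          = beta0 \<bullet> ((A ** G ** outer mu ** G ** A) *v beta0)
      \<and> prob_space.variance M psi
          = sigma\<^sup>2 / n * trace (Sig ** A ** outer mu ** A)"
\<comment> \<open>Only second moments of the noise enter.\<close>
proof -
  interpret prob_space M by (rule P)
  define A where "A = matrix_inv (emp_cov Phi + diag_mat (gam s dlt lam))"
  define n where "n = real CARD('n)"
  define c where "c = (1 / n) *\<^sub>R (Phi *v (A *v mu))"
  define K where "K = mu \<bullet> (A *v (emp_cov Phi *v beta0))"
  have nonzero: "s j + gam s dlt lam j \<noteq> 0" for j
    using add_gam_pos[where s = s and j = j, OF spos lam dlt] by simp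
  then have "transpose A = A"
    unfolding A_def diag diag_mat_add by (rule transpose_matrix_inv_diag_mat)
  have "(expectation (\<lambda>w. K + c \<bullet> eps w) - mu \<bullet> beta0)\<^sup>2
      = beta0 \<bullet> ((A ** diag_mat (gam s dlt lam) ** outer mu ** diag_mat (gam s dlt lam) ** A) *v beta0)"
    unfolding expectation_affine_white_noise[OF rv indep sq_int mean0 var] K_def A_def diag
    using nonzero by (rule generalized_ridge_bias)
  moreover have "variance (\<lambda>w. K + c \<bullet> eps w) = sigma\<^sup>2 / n * trace (emp_cov Phi ** A ** outer mu ** A)"
    unfolding variance_affine_white_noise[OF rv indep sq_int mean0 var] c_def n_def
      noise_weight_inner_self_eq_trace[OF \<open>transpose A = A\<close>] by simp
  ultimately show ?thesis
    unfolding Let_def augmented_estimator_affine_in_noise[OF diag spos lam dlt]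
    unfolding A_def[symmetric] unfolding n_def[symmetric] unfolding c_def[symmetric] K_def[symmetric]
    by simp
qed

end
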